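(* Let $0 \le \tilde{p} \leq p \le 1$. Consider $\mathrm{USD}_p$ in configuration $\mathbf{x}(t)$ and $\mathrm{USD}_{\tilde{p}}$ in configuration $\tilde{\mathbf{x}}(t)$ with $\mathbf{x}(t) \succeq_C \tilde{\mathbf{x}}(t)$. Then there exists a bijection $b: [n]^2\times(0,1] \to [n]^2\times(0,1]$ between the random choices of the two schedulers such that, if $\mathrm{USD}_p$ performs its interaction with random choice $\omega$ and $\mathrm{USD}_{\tilde{p}}$ with random choice $b(\omega)$, then $\mathbf{x}(t+1) \succeq_C \tilde{\mathbf{x}}(t+1)$.
   Context: Population protocol with $n$ agents labeled $1,\dots,n$, each in a state from $Q=\{1,2,\bot\}$ (Opinion 1, Opinion 2, undecided). In each interaction the scheduler draws $(i,j,r) \in [n]^2\times(0,1]$ uniformly at random: $i$ is the initiator, $j$ the responder, and only the initiator changes state. In $\mathrm{USD}_p$: if the initiator is $2$ and the responder $1$, the initiator becomes $\bot$; if the initiator is $1$ and the responder $2$, the initiator stays $1$ if $r\le p$ and becomes $\bot$ otherwise; if the initiator is $\bot$, it adopts the responder's state; otherwise nothing changes. A configuration $(x_1,x_2,u)$ counts the agents in states $1,2,\bot$. The states are ordered by $1 \succeq_Q \bot \succeq_Q 2$, and for configurations $\mathbf{x}=(x_1,x_2,u)$, $\tilde{\mathbf{x}}=(\tilde{x}_1,\tilde{x}_2,\tilde{u})$ we write $\mathbf{x}\succeq_C\tilde{\mathbf{x}}$ if $x_1\ge\tilde{x}_1$ and $x_1+u\ge\tilde{x}_1+\tilde{u}$.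 At time $t$ the agents in each process are labeled so that their states are sorted: $q_i(t)\succeq_Q q_{i+1}(t)$ and $\tilde{q}_i(t)\succeq_Q\tilde{q}_{i+1}(t)$ for all $i\in[n-1]$. *)

theory Defs
  imports Complex_Main
begin

datatype state = Op1 | Op2 | Und

text \<open>Configuration: (x1, x2, u) = numbers of agents in states 1, 2, undecided.\<close>
type_synonym config = "nat \<times> nat \<times> nat"

definition valid_config :: "nat \<Rightarrow> config \<Rightarrow> bool" where
  "valid_config n c = (case c of (x1, x2, u) \<Rightarrow> x1 + x2 + u = n)"

definition config_ge :: "config \<Rightarrow> config \<Rightarrow> bool" where
  "config_ge c c' = (case c of (x1, x2, u) \<Rightarrow> case c' of (y1, y2, v) \<Rightarrow>
      x1 \<ge> y1 \<and> x1 + u \<ge> y1 + v)"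

text \<open>State of agent i (labels 1..n) when agents are sorted so that
  q_i \<succeq>_Q q_{i+1} with 1 \<succeq>_Q undecided \<succeq>_Q 2.\<close>
definition agent_state :: "config \<Rightarrow> nat \<Rightarrow> state" where
  "agent_state c i = (case c of (x1, x2, u) \<Rightarrow>
      if i \<le> x1 then Op1 else if i \<le> x1 + u then Und else Op2)"

definition usd_trans :: "real \<Rightarrow> state \<Rightarrow> state \<Rightarrow> real \<Rightarrow> state" where
  "usd_trans p qi qj r =
     (if qi = Op2 \<and> qj = Op1 then Und
      else if qi = Op1 \<and> qj = Op2 then (if r \<le> p then Op1 else Und)
      else if qi = Und then qj
      else qi)"

definition count_vec :: "state \<Rightarrow> config" where
  "count_vec q = (case q of Op1 \<Rightarrow> (1, 0, 0) | Op2 \<Rightarrow> (0, 1, 0) | Und \<Rightarrow> (0, 0, 1))"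

definition usd_step :: "real \<Rightarrow> config \<Rightarrow> nat \<times> nat \<times> real \<Rightarrow> config" where
  "usd_step p c \<omega> = (case \<omega> of (i, j, r) \<Rightarrow>
     let qi = agent_state c i; qj = agent_state c j; q' = usd_trans p qi qj r;
         (x1, x2, u) = c; (a1, a2, a3) = count_vec qi; (b1, b2, b3) = count_vec q'
     in (x1 - a1 + b1, x2 - a2 + b2, u - a3 + b3))"

definition choices :: "nat \<Rightarrow> (nat \<times> nat \<times> real) set" where
  "choices n = {1..n} \<times> {1..n} \<times> {0<..1}"

end

theory Submission
  imports Defs
begin

text \<open>The coupling is the identity on random choices: with both populations labelled in
  sorted order, \<open>c \<succeq>\<^sub>C ct\<close> says that every agent is at least as high in \<open>c\<close> as in
  \<open>ct\<close>, and the USD transition is monotone in both states and in \<open>p\<close>, so the initiator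
  remains at least as high after the step. For the counts, write \<open>N(c, q)\<close> for the number
  of agents in a state \<open>\<succeq>\<^sub>Q q\<close>; the initiator \<open>i\<close> is counted iff \<open>i \<le> N(c, q)\<close>, so
  removing it yields \<open>N(c, q) - [i \<le> N(c, q)]\<close>, which is monotone in \<open>N(c, q)\<close>.\<close>

fun state_rank :: "state \<Rightarrow> nat" where
  "state_rank Op2 = 0"
| "state_rank Und = 1"
| "state_rank Op1 = 2"

instantiation state :: linorder
begin

definition less_eq_state :: "state \<Rightarrow> state \<Rightarrow> bool" where
  "q \<le> q' \<longleftrightarrow> state_rank q \<le> state_rank q'"

definition less_state :: "state \<Rightarrow> state \<Rightarrow> bool" where
  "q < q' \<longleftrightarrow> state_rank q < state_rank q'"

instance
proof
  fix q q' :: state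
  show "q \<le> q' \<Longrightarrow> q' \<le> q \<Longrightarrow> q = q'"
    unfolding less_eq_state_def by (cases q; cases q') auto
qed (auto simp: less_eq_state_def less_state_def)

end

lemma usd_trans_mono:
  assumes "pt \<le> p" and "qi' \<le> qi" and "qj' \<le> qj"
  shows "usd_trans pt qi' qj' r \<le> usd_trans p qi qj r"
  using assms unfolding usd_trans_def less_eq_state_def
  by (cases qi; cases qj; cases qi'; cases qj') auto

lemma agent_state_mono:
  assumes "config_ge c ct"
  shows "agent_state ct i \<le> agent_state c i"
  using assms unfolding config_ge_def agent_state_def less_eq_state_def
  by (auto split: prod.splits)

definition count_at_least :: "config \<Rightarrow> state \<Rightarrow> nat" where
  "count_at_least c q = (case c of (x1, x2, u) \<Rightarrow>
     (case q of Op1 \<Rightarrow> x1 | Und \<Rightarrow> x1 + u | Op2 \<Rightarrow> x1 + x2 + u))"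

lemma config_ge_iff_count_at_least:
  assumes "valid_config n c" and "valid_config n ct"
  shows "config_ge c ct \<longleftrightarrow> (\<forall>q. count_at_least ct q \<le> count_at_least c q)"
proof
  assume "config_ge c ct"
  then show "\<forall>q. count_at_least ct q \<le> count_at_least c q"
    using assms unfolding config_ge_def valid_config_def count_at_least_def
    by (auto split: prod.splits state.split)
next
  assume "\<forall>q. count_at_least ct q \<le> count_at_least c q"
  from this[rule_format, of Op1] this[rule_format, of Und] show "config_ge c ct"
    unfolding config_ge_def count_at_least_def by (auto split: prod.splits)
qed

lemma le_agent_state_iff:
  assumes "valid_config n c" and "i \<le> n"
  shows "q \<le> agent_state c i \<longleftrightarrow> i \<le> count_at_least c q"
  using assms unfolding valid_config_def agent_state_def count_at_least_def less_eq_state_def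
  by (cases q) (auto split: prod.splits)

definition reassign_agent :: "config \<Rightarrow> nat \<Rightarrow> state \<Rightarrow> config" where
  "reassign_agent c i q = (case c of (x1, x2, u) \<Rightarrow>
     case count_vec (agent_state c i) of (a1, a2, a3) \<Rightarrow>
     case count_vec q of (b1, b2, b3) \<Rightarrow> (x1 - a1 + b1, x2 - a2 + b2, u - a3 + b3))"

lemma usd_step_eq_reassign_agent:
  "usd_step p c (i, j, r) =
     reassign_agent c i (usd_trans p (agent_state c i) (agent_state c j) r)"
  unfolding usd_step_def reassign_agent_def Let_def by (simp split: prod.splits)

lemma valid_config_reassign_agent:
  assumes "valid_config n c" and "i \<in> {1..n}"
  shows "valid_config n (reassign_agent c i q)"
  using assms
  unfolding valid_config_def reassign_agent_def agent_state_def count_vec_def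
  by (cases q) (auto split: prod.splits)

lemma count_at_least_reassign_agent:
  assumes "valid_config n c" and "i \<in> {1..n}"
  shows "count_at_least (reassign_agent c i q') q =
    count_at_least c q - of_bool (i \<le> count_at_least c q) + of_bool (q \<le> q')"
  using assms
  unfolding valid_config_def reassign_agent_def agent_state_def count_vec_def
    count_at_least_def less_eq_state_def
  by (cases q; cases q') (auto split: prod.splits)

lemma diff_of_bool_le_mono:
  fixes a b i :: nat
  assumes "b \<le> a"
  shows "b - of_bool (i \<le> b) \<le> a - of_bool (i \<le> a)"
  using assms by auto

lemma reassign_agent_mono:
  assumes "valid_config n c" and "valid_config n ct" and "config_ge c ct"
    and "i \<in> {1..n}" and "q' \<le> q"
  shows "config_ge (reassign_agent c i q) (reassign_agent ct i q')"
proof -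
  have "count_at_least (reassign_agent ct i q') s \<le> count_at_least (reassign_agent c i q) s"
    for s
  proof -
    have "count_at_least ct s \<le> count_at_least c s"
      using assms(1-3) config_ge_iff_count_at_least by blast
    then have "count_at_least ct s - of_bool (i \<le> count_at_least ct s)
        \<le> count_at_least c s - of_bool (i \<le> count_at_least c s)"
      by (rule diff_of_bool_le_mono)
    moreover have "of_bool (s \<le> q') \<le> (of_bool (s \<le> q) :: nat)"
      using \<open>q' \<le> q\<close> by auto
    ultimately show ?thesis
      unfolding count_at_least_reassign_agent[OF assms(1,4)]
        count_at_least_reassign_agent[OF assms(2,4)]
      by (rule add_mono)
  qed
  then show ?thesis
    using assms(1,2,4) valid_config_reassign_agent config_ge_iff_count_at_least by blast
qed

lemma usd_step_mono:
  assumes "pt \<le> p" and "valid_config n c" and "valid_config n ct" and "config_ge c ct"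
    and "i \<in> {1..n}"
  shows "config_ge (usd_step p c (i, j, r)) (usd_step pt ct (i, j, r))"
  unfolding usd_step_eq_reassign_agent
  using assms
  by (intro reassign_agent_mono usd_trans_mono agent_state_mono)

theorem lemma5:
  fixes n :: nat and p pt :: real and c ct :: config
  assumes "0 \<le> pt" and "pt \<le> p" and "p \<le> 1"
    and "valid_config n c" and "valid_config n ct"
    and "config_ge c ct"
  shows "\<exists>b. bij_betw b (choices n) (choices n) \<and>
           (\<forall>\<omega>\<in>choices n. config_ge (usd_step p c \<omega>) (usd_step pt ct (b \<omega>)))"
proof (intro exI[of _ id] conjI ballI)
  show "bij_betw id (choices n) (choices n)" by simp
next
  fix \<omega> assume "\<omega> \<in> choices n"
  then obtain i j r where "\<omega> = (i, j, r)" and "i \<in> {1..n}"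
    unfolding choices_def by auto
  then show "config_ge (usd_step p c \<omega>) (usd_step pt ct (id \<omega>))"
    using assms usd_step_mono by simp
qed

end
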